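(* In the standing setup, let $(Z,H,(c_x))$ satisfy properties (P1) and (P2) for some $j$, and let $W$ be a boundary wall of $Z$. Then all edges $e$ dual to $W$ that cross out of $Z$ determine the same equivalence class $[c_e]_W$; in particular they all give the same value $c_e(\overline W)$.
   Context: Standing setup. $X$ is a finite-dimensional CAT(0) cube complex, $\delta$-hyperbolic, with a group $G$ acting properly and cocompactly on it. For an edge $e$, $W(e)$ is the wall dual to $e$. Walls of $X$ are closed convex; $X\setminus W$ has two components whose closures are the half-spaces of $W$. $K\trianglelefteq G$ is a torsion-free normal subgroup, $\mathcal X=X/K$, and $\overline W$ denotes the image in $\mathcal X$ of a wall $W$ of $X$ (a wall of $\mathcal X$). All walls of $\mathcal X$ are compact and embedded, and there is $R\ge\delta+2\sqrt{\dim X}$ such that distinct walls of $X$ at distance $<R$ have distinct images in $\mathcal X$. $\Gamma$ is the graph whose vertices are the walls of $\mathcal X$, with distinct walls $\overline W_1,\overline W_2$ adjacent iff $d(\overline W_1,\overline W_2)\le R$ in $\mathcal X$; $k$ bounds its vertex degrees. $C_{k+1}(\Gamma)$ is the set of maps $c:V(\Gamma)\to\{1,\dots,k+1\}$ giving distinct values to adjacent vertices; $G$ acts on it by $(gc)(\overline W)=c(g^{-1}\overline W)$. For a wall $W$ of $X$ and $c\in C_{k+1}(\Gamma)$, $[c]_W$ is the set of $c'\in C_{k+1}(\Gamma)$ that agree with $c$ on the ball of radius $c(\overline W)$ about $\overline W$ in $\Gamma$ (combinatorial distance). Fix $j\in\{0,\dots,k+1\}$. $Z\subset X$ is a nonempty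 intersection of half-spaces containing a vertex, $H\le G$ preserves $Z$ and acts freely and cocompactly on it, and each vertex $x\in Z$ carries $c_x\in C_{k+1}(\Gamma)$ with $c_{hx}=hc_x$ for $h\in H$, such that: (P1) if an edge $e$ joins vertices $x,y\in Z$ then $[c_x]_{W(e)}=[c_y]_{W(e)}$; (P2) if an edge $e$ joins vertices $x,y$ with $x\in Z$, then $y\in Z$ iff $c_x(\overline{W(e)})>j$. An edge $e$ crosses out of $Z$ if exactly one endpoint $x$ lies in $Z$; then put $c_e:=c_x$. A boundary wall of $Z$ is a wall $W(e)$ for some edge $e$ crossing out of $Z$. *)

theory Defs
  imports "HOL-Analysis.Analysis" "HOL-Algebra.Coset"
begin

section \<open>CAT(0) cube complexes, modelled through their 1-skeleton (median graphs)\<close>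

definition Erel :: "('v \<Rightarrow> 'v \<Rightarrow> bool) \<Rightarrow> ('v \<times> 'v) set" where
  "Erel E = {(x, y). E x y}"

definition gdist :: "('v \<Rightarrow> 'v \<Rightarrow> bool) \<Rightarrow> 'v \<Rightarrow> 'v \<Rightarrow> nat" where
  "gdist E a b = (LEAST n. (a, b) \<in> (Erel E) ^^ n)"

definition median_graph :: "('v \<Rightarrow> 'v \<Rightarrow> bool) \<Rightarrow> bool" where
  "median_graph E \<longleftrightarrow>
     (\<forall>x y. E x y \<longrightarrow> E y x) \<and> (\<forall>x. \<not> E x x) \<and>
     (\<forall>a b. \<exists>n. (a, b) \<in> (Erel E) ^^ n) \<and>
     (\<forall>a b c. \<exists>!m. gdist E a m + gdist E m b = gdist E a b \<and>
                    gdist E b m + gdist E m c = gdist E b c \<and>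
                    gdist E a m + gdist E m c = gdist E a c)"

definition hs :: "('v \<Rightarrow> 'v \<Rightarrow> bool) \<Rightarrow> 'v \<Rightarrow> 'v \<Rightarrow> 'v set" where
  "hs E a b = {v. gdist E v a < gdist E v b}"

definition HS :: "('v \<Rightarrow> 'v \<Rightarrow> bool) \<Rightarrow> 'v set set" where
  "HS E = {hs E a b | a b. E a b}"

definition wallE :: "('v \<Rightarrow> 'v \<Rightarrow> bool) \<Rightarrow> 'v \<Rightarrow> 'v \<Rightarrow> 'v set set" where
  "wallE E a b = {hs E a b, hs E b a}"

definition walls :: "('v \<Rightarrow> 'v \<Rightarrow> bool) \<Rightarrow> 'v set set set" where
  "walls E = {wallE E a b | a b. E a b}"

definition wall_of :: "'v set \<Rightarrow> 'v set set" where
  "wall_of h = {h, - h}"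

subsection \<open>Geometric realisation: points as half-space coordinates in [0,1]\<close>

definition vpt :: "('v \<Rightarrow> 'v \<Rightarrow> bool) \<Rightarrow> 'v \<Rightarrow> 'v set \<Rightarrow> real" where
  "vpt E v = (\<lambda>h. if h \<in> HS E \<and> v \<in> h then 1 else 0)"

text \<open>cube E v S: the walls in S span a cube at the vertex v (all flips of subsets of S are vertices).\<close>
definition cube :: "('v \<Rightarrow> 'v \<Rightarrow> bool) \<Rightarrow> 'v \<Rightarrow> 'v set set set \<Rightarrow> bool" where
  "cube E v S \<longleftrightarrow> finite S \<and> S \<subseteq> walls E \<and>
     (\<forall>T\<subseteq>S. \<exists>u. \<forall>h\<in>HS E. (u \<in> h \<longleftrightarrow> ((v \<in> h) \<noteq> (wall_of h \<in> T))))"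

definition in_cube :: "('v \<Rightarrow> 'v \<Rightarrow> bool) \<Rightarrow> 'v \<Rightarrow> 'v set set set \<Rightarrow> ('v set \<Rightarrow> real) \<Rightarrow> bool" where
  "in_cube E v S p \<longleftrightarrow> (\<forall>h. h \<notin> HS E \<longrightarrow> p h = 0) \<and>
     (\<forall>h\<in>HS E. if wall_of h \<in> S then 0 \<le> p h \<and> p h \<le> 1 \<and> p (- h) = 1 - p h
                 else p h = vpt E v h)"

definition Pts :: "('v \<Rightarrow> 'v \<Rightarrow> bool) \<Rightarrow> ('v set \<Rightarrow> real) set" where
  "Pts E = {p. \<exists>v S. cube E v S \<and> in_cube E v S p}"

definition same_cube :: "('v \<Rightarrow> 'v \<Rightarrow> bool) \<Rightarrow> ('v set \<Rightarrow> real) \<Rightarrow> ('v set \<Rightarrow> real) \<Rightarrow> bool" where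
  "same_cube E p q \<longleftrightarrow> (\<exists>v S. cube E v S \<and> in_cube E v S p \<and> in_cube E v S q)"

text \<open>Euclidean distance inside a common cube (each wall contributes two half-space coordinates).\<close>
definition cdist :: "('v \<Rightarrow> 'v \<Rightarrow> bool) \<Rightarrow> ('v set \<Rightarrow> real) \<Rightarrow> ('v set \<Rightarrow> real) \<Rightarrow> real" where
  "cdist E p q = sqrt ((\<Sum>h\<in>{h\<in>HS E. p h \<noteq> q h}. (p h - q h)^2) / 2)"

definition is_chain :: "('v \<Rightarrow> 'v \<Rightarrow> bool) \<Rightarrow> ('v set \<Rightarrow> real) \<Rightarrow> ('v set \<Rightarrow> real) \<Rightarrow> ('v set \<Rightarrow> real) list \<Rightarrow> bool" where
  "is_chain E p q ps \<longleftrightarrow> ps \<noteq> [] \<and> hd ps = p \<and> last ps = q \<and>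
     (\<forall>i < length ps - 1. same_cube E (ps ! i) (ps ! Suc i))"

definition chain_len :: "('v \<Rightarrow> 'v \<Rightarrow> bool) \<Rightarrow> ('v set \<Rightarrow> real) list \<Rightarrow> real" where
  "chain_len E ps = (\<Sum>i < length ps - 1. cdist E (ps ! i) (ps ! Suc i))"

definition cdX :: "('v \<Rightarrow> 'v \<Rightarrow> bool) \<Rightarrow> ('v set \<Rightarrow> real) \<Rightarrow> ('v set \<Rightarrow> real) \<Rightarrow> real" where
  "cdX E p q = Inf {chain_len E ps | ps. is_chain E p q ps}"

definition mtop :: "('v \<Rightarrow> 'v \<Rightarrow> bool) \<Rightarrow> ('v set \<Rightarrow> real) topology" where
  "mtop E = Metric_space.mtopology (Pts E) (cdX E)"

definition hyp :: "('v \<Rightarrow> 'v \<Rightarrow> bool) \<Rightarrow> 'v set set \<Rightarrow> ('v set \<Rightarrow> real) set" where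
  "hyp E W = {p \<in> Pts E. \<forall>h\<in>W. p h = 1/2}"

definition ghalf :: "('v \<Rightarrow> 'v \<Rightarrow> bool) \<Rightarrow> 'v set \<Rightarrow> ('v set \<Rightarrow> real) set" where
  "ghalf E h = {p \<in> Pts E. p h \<ge> 1/2}"

definition wdist :: "('v \<Rightarrow> 'v \<Rightarrow> bool) \<Rightarrow> 'v set set \<Rightarrow> 'v set set \<Rightarrow> real" where
  "wdist E W1 W2 = Inf {cdX E p q | p q. p \<in> hyp E W1 \<and> q \<in> hyp E W2}"

definition finite_dim :: "('v \<Rightarrow> 'v \<Rightarrow> bool) \<Rightarrow> bool" where
  "finite_dim E \<longleftrightarrow> bdd_above {card S | S. \<exists>v. cube E v S}"

definition dimX :: "('v \<Rightarrow> 'v \<Rightarrow> bool) \<Rightarrow> nat" where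
  "dimX E = Sup {card S | S. \<exists>v. cube E v S}"

definition geodesic :: "('v \<Rightarrow> 'v \<Rightarrow> bool) \<Rightarrow> ('v set \<Rightarrow> real) \<Rightarrow> ('v set \<Rightarrow> real) \<Rightarrow> (real \<Rightarrow> 'v set \<Rightarrow> real) \<Rightarrow> bool" where
  "geodesic E p q \<gamma> \<longleftrightarrow> \<gamma> 0 = p \<and> \<gamma> (cdX E p q) = q \<and>
     (\<forall>s\<in>{0..cdX E p q}. \<gamma> s \<in> Pts E) \<and>
     (\<forall>s\<in>{0..cdX E p q}. \<forall>t\<in>{0..cdX E p q}. cdX E (\<gamma> s) (\<gamma> t) = \<bar>s - t\<bar>)"

definition hyperbolic :: "('v \<Rightarrow> 'v \<Rightarrow> bool) \<Rightarrow> real \<Rightarrow> bool" where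
  "hyperbolic E \<delta> \<longleftrightarrow> (\<forall>p q r \<gamma>1 \<gamma>2 \<gamma>3. p \<in> Pts E \<and> q \<in> Pts E \<and> r \<in> Pts E \<and>
      geodesic E p q \<gamma>1 \<and> geodesic E q r \<gamma>2 \<and> geodesic E r p \<gamma>3 \<longrightarrow>
      (\<forall>x\<in>\<gamma>1 ` {0..cdX E p q}. \<exists>y\<in>\<gamma>2 ` {0..cdX E q r} \<union> \<gamma>3 ` {0..cdX E r p}. cdX E x y \<le> \<delta>))"

definition auto_action :: "('g, 'b) monoid_scheme \<Rightarrow> ('v \<Rightarrow> 'v \<Rightarrow> bool) \<Rightarrow> ('g \<Rightarrow> 'v \<Rightarrow> 'v) \<Rightarrow> bool" where
  "auto_action G E \<phi> \<longleftrightarrow>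
     (\<forall>g\<in>carrier G. bij (\<phi> g) \<and> (\<forall>x y. E x y \<longleftrightarrow> E (\<phi> g x) (\<phi> g y))) \<and>
     \<phi> \<one>\<^bsub>G\<^esub> = id \<and>
     (\<forall>g\<in>carrier G. \<forall>h\<in>carrier G. \<phi> (g \<otimes>\<^bsub>G\<^esub> h) = \<phi> g \<circ> \<phi> h)"

definition pact :: "('g \<Rightarrow> 'v \<Rightarrow> 'v) \<Rightarrow> 'g \<Rightarrow> ('v set \<Rightarrow> real) \<Rightarrow> ('v set \<Rightarrow> real)" where
  "pact \<phi> g p = (\<lambda>h. p (\<phi> g -` h))"

definition proper_action :: "('g, 'b) monoid_scheme \<Rightarrow> ('v \<Rightarrow> 'v \<Rightarrow> bool) \<Rightarrow> ('g \<Rightarrow> 'v \<Rightarrow> 'v) \<Rightarrow> bool" where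
  "proper_action G E \<phi> \<longleftrightarrow> (\<forall>C. compactin (mtop E) C \<longrightarrow>
      finite {g \<in> carrier G. pact \<phi> g ` C \<inter> C \<noteq> {}})"

definition cocompact_on :: "('v \<Rightarrow> 'v \<Rightarrow> bool) \<Rightarrow> ('g \<Rightarrow> 'v \<Rightarrow> 'v) \<Rightarrow> 'g set \<Rightarrow> ('v set \<Rightarrow> real) set \<Rightarrow> bool" where
  "cocompact_on E \<phi> A Y \<longleftrightarrow> (\<exists>C. compactin (mtop E) C \<and> C \<subseteq> Y \<and> Y \<subseteq> (\<Union>g\<in>A. pact \<phi> g ` C))"

definition wimg :: "('g \<Rightarrow> 'v \<Rightarrow> 'v) \<Rightarrow> 'g \<Rightarrow> 'v set set \<Rightarrow> 'v set set" where
  "wimg \<phi> g W = (\<lambda>h. \<phi> g ` h) ` W"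

text \<open>The wall of the quotient X/K that is the image of the wall W (its K-orbit).\<close>
definition Wbar :: "('g \<Rightarrow> 'v \<Rightarrow> 'v) \<Rightarrow> 'g set \<Rightarrow> 'v set set \<Rightarrow> 'v set set set" where
  "Wbar \<phi> K W = {wimg \<phi> k W | k. k \<in> K}"

definition VGamma :: "('v \<Rightarrow> 'v \<Rightarrow> bool) \<Rightarrow> ('g \<Rightarrow> 'v \<Rightarrow> 'v) \<Rightarrow> 'g set \<Rightarrow> 'v set set set set" where
  "VGamma E \<phi> K = Wbar \<phi> K ` walls E"

definition qdist :: "('v \<Rightarrow> 'v \<Rightarrow> bool) \<Rightarrow> 'v set set set \<Rightarrow> 'v set set set \<Rightarrow> real" where
  "qdist E O1 O2 = Inf {wdist E W1 W2 | W1 W2. W1 \<in> O1 \<and> W2 \<in> O2}"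

definition GammaRel :: "('v \<Rightarrow> 'v \<Rightarrow> bool) \<Rightarrow> ('g \<Rightarrow> 'v \<Rightarrow> 'v) \<Rightarrow> 'g set \<Rightarrow> real \<Rightarrow> ('v set set set \<times> 'v set set set) set" where
  "GammaRel E \<phi> K R = {(O1, O2). O1 \<in> VGamma E \<phi> K \<and> O2 \<in> VGamma E \<phi> K \<and> O1 \<noteq> O2 \<and> qdist E O1 O2 \<le> R}"

definition gball :: "('v \<Rightarrow> 'v \<Rightarrow> bool) \<Rightarrow> ('g \<Rightarrow> 'v \<Rightarrow> 'v) \<Rightarrow> 'g set \<Rightarrow> real \<Rightarrow> nat \<Rightarrow> 'v set set set \<Rightarrow> 'v set set set set" where
  "gball E \<phi> K R r U = {U'. \<exists>n\<le>r. (U, U') \<in> (GammaRel E \<phi> K R) ^^ n}"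

text \<open>Proper colourings C_m(Gamma); maps are extended by 0 outside V(Gamma).\<close>
definition Col :: "('v \<Rightarrow> 'v \<Rightarrow> bool) \<Rightarrow> ('g \<Rightarrow> 'v \<Rightarrow> 'v) \<Rightarrow> 'g set \<Rightarrow> real \<Rightarrow> nat \<Rightarrow> ('v set set set \<Rightarrow> nat) set" where
  "Col E \<phi> K R m = {c. (\<forall>U\<in>VGamma E \<phi> K. c U \<in> {1..m}) \<and> (\<forall>U. U \<notin> VGamma E \<phi> K \<longrightarrow> c U = 0) \<and>
      (\<forall>(O1, O2)\<in>GammaRel E \<phi> K R. c O1 \<noteq> c O2)}"

definition cact :: "('g, 'b) monoid_scheme \<Rightarrow> ('g \<Rightarrow> 'v \<Rightarrow> 'v) \<Rightarrow> 'g \<Rightarrow> ('v set set set \<Rightarrow> nat) \<Rightarrow> ('v set set set \<Rightarrow> nat)" where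
  "cact G \<phi> g c = (\<lambda>U. c (wimg \<phi> (inv\<^bsub>G\<^esub> g) ` U))"

definition cls :: "('v \<Rightarrow> 'v \<Rightarrow> bool) \<Rightarrow> ('g \<Rightarrow> 'v \<Rightarrow> 'v) \<Rightarrow> 'g set \<Rightarrow> real \<Rightarrow> nat \<Rightarrow> ('v set set set \<Rightarrow> nat) \<Rightarrow> 'v set set \<Rightarrow> ('v set set set \<Rightarrow> nat) set" where
  "cls E \<phi> K R k c W = {c' \<in> Col E \<phi> K R (k + 1).
      \<forall>U\<in>gball E \<phi> K R (c (Wbar \<phi> K W)) (Wbar \<phi> K W). c' U = c U}"

end

theory Submission
  imports Defs
begin

text \<open>The vertices of \<open>Z\<close> form an intersection of half-spaces of the 1-skeleton of \<open>X\<close>, a median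
  graph. Such a set is convex, and every edge leaving it is dual to one of its defining
  half-spaces. Given two edges \<open>x y\<close> and \<open>x' y'\<close> leaving \<open>Z\<close> across \<open>W\<close>, the quadrangle condition
  produces a neighbour of \<open>x\<close> in \<open>Z\<close>, one step closer to \<open>x'\<close>, which again has an edge leaving
  \<open>Z\<close> across \<open>W\<close>; so \<open>x\<close> and \<open>x'\<close> are joined by a path of such vertices inside \<open>Z\<close>.
  Along an edge \<open>x u\<close> of that path the walls of \<open>x u\<close> and \<open>x y\<close> meet the same cube, so their
  images are adjacent in \<open>\<Gamma>\<close>, and by (P2) the colour of the first exceeds \<open>j \<ge> c\<^sub>x(W)\<close>. Hence the
  ball defining \<open>[c\<^sub>x]\<^bsub>xu\<^esub>\<close> contains the ball defining \<open>[c\<^sub>x]\<^sub>W\<close>, and (P1) transports both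
  \<open>[c\<^sub>x]\<^sub>W\<close> and \<open>c\<^sub>x(W)\<close> to \<open>u\<close>.\<close>

section \<open>Median graphs\<close>

locale median =
  fixes E :: "'v \<Rightarrow> 'v \<Rightarrow> bool"
  assumes median_graph: "median_graph E"
begin

lemma edge_sym: "E x y \<Longrightarrow> E y x"
  using median_graph unfolding median_graph_def by blast

lemma edge_irrefl: "\<not> E x x"
  using median_graph unfolding median_graph_def by blast

abbreviation is_median :: "'v \<Rightarrow> 'v \<Rightarrow> 'v \<Rightarrow> 'v \<Rightarrow> bool" where
  "is_median a b c m \<equiv> gdist E a m + gdist E m b = gdist E a b \<and>
     gdist E b m + gdist E m c = gdist E b c \<and> gdist E a m + gdist E m c = gdist E a c"

lemma median_exists: "\<exists>m. is_median a b c m"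
  using median_graph unfolding median_graph_def by blast

lemma median_unique: "is_median a b c m \<Longrightarrow> is_median a b c m' \<Longrightarrow> m = m'"
  using median_graph unfolding median_graph_def by blast

lemma relpow_Erel_sym: "(a, b) \<in> Erel E ^^ n \<Longrightarrow> (b, a) \<in> Erel E ^^ n"
proof (induction n arbitrary: b)
  case (Suc n)
  then obtain c where "(a, c) \<in> Erel E ^^ n" "(c, b) \<in> Erel E" by auto
  then have "(c, a) \<in> Erel E ^^ n" "(b, c) \<in> Erel E"
    using Suc.IH edge_sym unfolding Erel_def by blast+
  then show ?case by (meson relpow_Suc_I2)
qed simp

lemma path_exists: "\<exists>n. (a, b) \<in> Erel E ^^ n"
  using median_graph unfolding median_graph_def by blast

lemma gdist_path: "(a, b) \<in> Erel E ^^ gdist E a b"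
  unfolding gdist_def using path_exists by (rule LeastI_ex)

lemma gdist_le_path: "(a, b) \<in> Erel E ^^ n \<Longrightarrow> gdist E a b \<le> n"
  unfolding gdist_def by (rule Least_le)

lemma gdist_self [simp]: "gdist E a a = 0"
  using gdist_le_path[of a a 0] by simp

lemma gdist_eq_0D: "gdist E a b = 0 \<Longrightarrow> a = b"
  using gdist_path[of a b] by simp

lemma gdist_commute: "gdist E a b = gdist E b a"
  using gdist_le_path[OF relpow_Erel_sym[OF gdist_path[of a b]]]
    gdist_le_path[OF relpow_Erel_sym[OF gdist_path[of b a]]] by simp

lemma gdist_triangle: "gdist E a c \<le> gdist E a b + gdist E b c"
proof -
  have "(a, c) \<in> Erel E ^^ gdist E a b O Erel E ^^ gdist E b c"
    using gdist_path[of a b] gdist_path[of b c] by blast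
  then show ?thesis by (simp add: relpow_add gdist_le_path)
qed

lemma gdist_edge: "E a b \<Longrightarrow> gdist E a b = 1"
proof -
  assume ab: "E a b"
  then have "gdist E a b \<le> 1" by (intro gdist_le_path) (simp add: Erel_def)
  moreover have "gdist E a b \<noteq> 0" using ab gdist_eq_0D edge_irrefl by blast
  ultimately show ?thesis by simp
qed

lemma gdist_eq_1D: "gdist E a b = 1 \<Longrightarrow> E a b"
  using gdist_path[of a b] by (auto simp: Erel_def)

lemma gdist_edge_le: "E a b \<Longrightarrow> gdist E v b \<le> gdist E v a + 1"
  using gdist_triangle[where a = v and b = a and c = b] gdist_edge[of a b] by simp

lemma gdist_SucD: "gdist E a b = Suc n \<Longrightarrow> \<exists>c. E a c \<and> gdist E c b = n"
proof -
  assume d: "gdist E a b = Suc n"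
  then obtain c where ac: "(a, c) \<in> Erel E" and cb: "(c, b) \<in> Erel E ^^ n"
    using gdist_path[of a b] by (metis relpow_Suc_D2)
  from cb have "gdist E c b \<le> n" by (rule gdist_le_path)
  moreover have "gdist E a b \<le> gdist E a c + gdist E c b" by (rule gdist_triangle)
  ultimately show ?thesis using ac d gdist_edge[of a c] by (auto simp: Erel_def)
qed

lemma gdist_edge_neq: "E a b \<Longrightarrow> gdist E v a \<noteq> gdist E v b"
proof
  assume ab: "E a b" and eq: "gdist E v a = gdist E v b"
  obtain m where m: "is_median a b v m" using median_exists by blast
  then have "gdist E a m = 0 \<or> gdist E m b = 0" using gdist_edge[OF ab] by arith
  then have "m = a \<or> m = b" using gdist_eq_0D by metis
  then show False
    using m eq gdist_edge[OF ab] gdist_commute[of a v] gdist_commute[of b v] gdist_commute[of b a]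
    by auto
qed

lemma gdist_edge_cases:
  "E a b \<Longrightarrow> gdist E v b = gdist E v a + 1 \<or> gdist E v a = gdist E v b + 1"
  using gdist_edge_neq[of a b v] gdist_edge_le[of a b v] gdist_edge_le[of b a v] edge_sym[of a b]
  by linarith

lemma gdist_eq_2: "E x y \<Longrightarrow> E x z \<Longrightarrow> y \<noteq> z \<Longrightarrow> \<not> E y z \<Longrightarrow> gdist E y z = 2"
proof -
  assume xy: "E x y" and xz: "E x z" and "y \<noteq> z" "\<not> E y z"
  have "gdist E y z \<le> gdist E y x + gdist E x z" by (rule gdist_triangle)
  then have "gdist E y z \<le> 2" using gdist_edge[OF edge_sym[OF xy]] gdist_edge[OF xz] by simp
  moreover have "gdist E y z \<noteq> 0" "gdist E y z \<noteq> 1"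
    using \<open>y \<noteq> z\<close> \<open>\<not> E y z\<close> gdist_eq_0D gdist_eq_1D by blast+
  ultimately show ?thesis by linarith
qed

lemma quadrangle:
  assumes "gdist E u y = gdist E u z" "E x y" "E x z" "y \<noteq> z"
  shows "\<exists>w. E y w \<and> E z w \<and> gdist E u w + 1 = gdist E u y"
proof -
  have "\<not> E y z" using gdist_edge_neq[of y z u] assms(1) by auto
  then have yz: "gdist E y z = 2" using gdist_eq_2 assms by blast
  obtain m where m: "is_median y z u m" using median_exists by blast
  then have "gdist E y m = gdist E z m"
    using assms(1) gdist_commute[of u y] gdist_commute[of u z] by simp
  then have "gdist E y m = 1" "gdist E z m = 1" using m yz gdist_commute[of m z] by auto
  then show ?thesis
    using gdist_eq_1D m gdist_commute[of u y] gdist_commute[of u m] by (intro exI[of _ m]) auto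
qed

text \<open>Median graphs contain no induced \<open>K\<^sub>2\<^sub>,\<^sub>3\<close>: two common neighbours of three pairwise
  non-adjacent vertices are both their median.\<close>
lemma common_neighbours_eq:
  assumes "E p a" "E p b" "E p c" "E q a" "E q b" "E q c"
    and "a \<noteq> b" "b \<noteq> c" "a \<noteq> c" "\<not> E a b" "\<not> E b c" "\<not> E a c"
  shows "p = q"
proof -
  have "gdist E a b = 2" "gdist E b c = 2" "gdist E a c = 2"
    using gdist_eq_2 assms by blast+
  moreover have "gdist E a r = 1 \<and> gdist E r b = 1 \<and> gdist E b r = 1 \<and> gdist E r c = 1"
    if "E r a" "E r b" "E r c" for r
    using that gdist_edge edge_sym by blast
  ultimately have "is_median a b c p" "is_median a b c q" using assms by simp_all
  then show ?thesis by (rule median_unique)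
qed

section \<open>Half-spaces and walls\<close>

lemma mem_hs_iff: "E a b \<Longrightarrow> v \<in> hs E a b \<longleftrightarrow> gdist E v b = gdist E v a + 1"
  using gdist_edge_cases[of a b v] by (auto simp: hs_def)

lemma not_mem_hs_iff: "E a b \<Longrightarrow> v \<notin> hs E a b \<longleftrightarrow> gdist E v a = gdist E v b + 1"
  using gdist_edge_cases[of a b v] by (auto simp: hs_def)

lemma hs_compl: "E a b \<Longrightarrow> hs E b a = - hs E a b"
  using mem_hs_iff[OF edge_sym] not_mem_hs_iff by blast

lemma hs_self_iff: "a \<in> hs E a b \<longleftrightarrow> a \<noteq> b"
  using gdist_eq_0D[of a b] by (auto simp: hs_def)

lemma hs_square_subset:
  assumes wz: "E w z" and zz': "E z z'" and z'w': "E z' w'" and w'w: "E w' w"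
    and "w \<noteq> z'" "z \<noteq> w'" and u: "u \<in> hs E w' z'"
  shows "u \<in> hs E w z"
proof (rule ccontr)
  assume "u \<notin> hs E w z"
  then have uw: "gdist E u w = gdist E u z + 1" using not_mem_hs_iff[OF wz] by simp
  have uz': "gdist E u z' = gdist E u w' + 1" using u mem_hs_iff[OF z'w'[THEN edge_sym]] by simp
  have uw': "gdist E u w' = gdist E u z" and "gdist E u z' = gdist E u w"
    using uw uz' gdist_edge_cases[OF zz', of u] gdist_edge_cases[OF w'w, of u] by linarith+
  obtain m where zm: "E z m" and w'm: "E w' m" and um: "gdist E u m + 1 = gdist E u z"
    using quadrangle[OF uw'[symmetric] wz edge_sym[OF w'w]] \<open>z \<noteq> w'\<close> by metis
  have "\<not> E w z'" using gdist_edge_neq[of w z' u] \<open>gdist E u z' = gdist E u w\<close> by auto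
  moreover have "\<not> E w m" "\<not> E z' m" "w \<noteq> m" "z' \<noteq> m"
    using gdist_edge_le[of m w u] gdist_edge_le[of m z' u] edge_sym[of w m] edge_sym[of z' m]
      uw um \<open>gdist E u z' = gdist E u w\<close>
    by auto
  ultimately have "z = w'"
    using common_neighbours_eq[of z w z' m w'] wz zz' zm w'w z'w' w'm \<open>w \<noteq> z'\<close>
      edge_sym[of w z] edge_sym[of z' w'] by blast
  with \<open>z \<noteq> w'\<close> show False ..
qed

lemma hs_square:
  assumes "E w z" "E z z'" "E z' w'" "E w' w" "w \<noteq> z'" "z \<noteq> w'"
  shows "hs E w z = hs E w' z'"
  using hs_square_subset[of w z z' w'] hs_square_subset[of w' z' z w] assms
    edge_sym[of w z] edge_sym[of z z'] edge_sym[of z' w'] edge_sym[of w' w] by blast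

text \<open>Walk the crossing edge towards \<open>a b\<close> one square at a time; the quadrangle condition at \<open>a\<close>
  supplies each square.\<close>
lemma hs_eq_if_crossing:
  assumes ab: "E a b"
  shows "E w z \<Longrightarrow> w \<in> hs E a b \<Longrightarrow> z \<notin> hs E a b \<Longrightarrow> hs E w z = hs E a b"
proof (induction "gdist E w a" arbitrary: w z)
  case 0
  then have "w = a" using gdist_eq_0D by metis
  then have "gdist E z b = 0"
    using 0 not_mem_hs_iff[OF ab, of z] gdist_edge[OF edge_sym[of w z]] by simp
  then show ?case using \<open>w = a\<close> gdist_eq_0D by metis
next
  case (Suc n)
  have wa: "gdist E w a = Suc n" and wb: "gdist E w b = n + 2"
    using Suc mem_hs_iff[OF ab, of w] by simp_all
  have "gdist E z a = gdist E z b + 1" using Suc not_mem_hs_iff[OF ab] by simp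
  then have za: "gdist E z a = n + 2" and zb: "gdist E z b = Suc n"
    using wa wb gdist_edge_le[OF \<open>E w z\<close>, of a] gdist_edge_le[OF edge_sym[OF \<open>E w z\<close>], of b]
    by (simp_all add: gdist_commute[of z] gdist_commute[of w])
  obtain z' where zz': "E z z'" and z'b: "gdist E z' b = n" using gdist_SucD[OF zb] by blast
  have "gdist E a z \<le> gdist E a z' + 1" using gdist_edge_le[OF edge_sym[OF zz']] .
  moreover have "gdist E z' a \<le> gdist E z' b + gdist E b a" by (rule gdist_triangle)
  ultimately have "gdist E z' a = Suc n"
    using za z'b gdist_edge[OF edge_sym[OF ab]] gdist_commute[of z a] gdist_commute[of z' a] by simp
  then have z'_out: "z' \<notin> hs E a b" using z'b by (simp add: hs_def)
  then have "w \<noteq> z'" using Suc.prems by blast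
  obtain w' where ww': "E w w'" and z'w': "E z' w'" and aw': "gdist E a w' + 1 = gdist E a w"
    using quadrangle[of a w z' z] \<open>E w z\<close> zz' \<open>w \<noteq> z'\<close> wa \<open>gdist E z' a = Suc n\<close>
      edge_sym gdist_commute[of a w] gdist_commute[of a z'] by metis
  have w'a: "gdist E w' a = n" using aw' wa gdist_commute[of a] by simp
  have w'_in: "w' \<in> hs E a b"
    using w'a wb gdist_edge_le[OF edge_sym[OF ww'], of b]
    by (simp add: hs_def gdist_commute[of w'] gdist_commute[of w])
  have "hs E w' z' = hs E a b"
    using Suc.hyps(1)[OF w'a[symmetric] edge_sym[OF z'w'] w'_in z'_out] .
  moreover have "hs E w z = hs E w' z'"
    using hs_square[OF \<open>E w z\<close> zz' z'w' edge_sym[OF ww']] \<open>w \<noteq> z'\<close> Suc.prems w'_in by blast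
  ultimately show ?case by simp
qed

lemma wallE_eq_if_hs_eq:
  "E a b \<Longrightarrow> E c d \<Longrightarrow> hs E a b = hs E c d \<Longrightarrow> wallE E a b = wallE E c d"
  using hs_compl[of a b] hs_compl[of c d] by (simp add: wallE_def)

lemma hs_eq_if_wallE_eq:
  assumes "E a b" "E c d" "wallE E a b = wallE E c d" "c \<in> hs E a b"
  shows "hs E c d = hs E a b"
proof -
  have "hs E c d = hs E a b \<or> hs E c d = hs E b a" using assms(3) by (auto simp: wallE_def)
  moreover have "c \<in> hs E c d" using hs_self_iff edge_irrefl assms(2) by blast
  ultimately show ?thesis using assms(4) hs_compl[OF assms(1)] by blast
qed

lemma HSE: "h \<in> HS E \<Longrightarrow> (\<And>a b. E a b \<Longrightarrow> h = hs E a b \<Longrightarrow> P) \<Longrightarrow> P"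
  unfolding HS_def by blast

lemma Inter_HS_subset_hs:
  assumes "F \<subseteq> HS E" "E x y" "x \<in> \<Inter>F" "y \<notin> \<Inter>F"
  shows "\<Inter>F \<subseteq> hs E x y"
proof -
  obtain h where "h \<in> F" "y \<notin> h" using assms(4) by blast
  moreover obtain a b where "E a b" "h = hs E a b" using \<open>h \<in> F\<close> assms(1) HSE by blast
  ultimately have "hs E x y = h" using hs_eq_if_crossing assms(2,3) by blast
  then show ?thesis using \<open>h \<in> F\<close> by blast
qed

lemma Inter_HS_geodesic_step:
  assumes "F \<subseteq> HS E" "x \<in> \<Inter>F" "x' \<in> \<Inter>F" "E x u" "gdist E x' u < gdist E x' x"
  shows "u \<in> \<Inter>F"
proof
  fix h assume "h \<in> F"
  then obtain a b where "E a b" "h = hs E a b" using assms(1) HSE by blast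
  show "u \<in> h"
  proof (rule ccontr)
    assume "u \<notin> h"
    then have "hs E x u = h" using hs_eq_if_crossing \<open>E a b\<close> \<open>h = hs E a b\<close> assms(2,4) \<open>h \<in> F\<close>
      by blast
    then show False using assms(3,5) \<open>h \<in> F\<close> by (auto simp: hs_def)
  qed
qed

text \<open>\<open>u\<close> is given by the quadrangle condition at \<open>x'\<close>, applied to \<open>x\<close> and the neighbour \<open>v\<close> of \<open>y\<close>
  one step closer to \<open>y'\<close>.\<close>
lemma parallel_edge_closer:
  assumes xy: "E x y" and x'y': "E x' y'" and hs_eq: "hs E x y = hs E x' y'"
    and xx': "gdist E x x' = Suc n"
  shows "\<exists>u v. E x u \<and> E u v \<and> hs E u v = hs E x y \<and> gdist E u x' = n"
proof -
  have "x' \<in> hs E x y" using hs_eq hs_self_iff edge_irrefl x'y' by metis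
  then have x'y: "gdist E x' y = n + 2"
    using xx' mem_hs_iff[OF xy] gdist_commute[of x x'] by simp
  have "x \<in> hs E x' y'" using hs_eq hs_self_iff edge_irrefl xy by metis
  then have xy': "gdist E x y' = n + 2" using xx' mem_hs_iff[OF x'y'] by simp
  have "y' \<notin> hs E x y" using hs_eq hs_compl[OF x'y'] hs_self_iff[of y' x'] edge_irrefl x'y' by blast
  then have "gdist E y' x = gdist E y' y + 1" using not_mem_hs_iff[OF xy] by simp
  then have "gdist E y y' = Suc n" using xy' gdist_commute[of x y'] gdist_commute[of y y'] by simp
  then obtain v where yv: "E y v" and vy': "gdist E v y' = n" using gdist_SucD by blast
  have "gdist E v x' \<le> gdist E v y' + gdist E y' x'" by (rule gdist_triangle)
  moreover have "gdist E x' y \<le> gdist E x' v + 1" using gdist_edge_le[OF edge_sym[OF yv]] .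
  ultimately have vx': "gdist E x' v = Suc n"
    using vy' x'y gdist_edge[OF edge_sym[OF x'y']] gdist_commute[of v x'] by simp
  have "x \<noteq> v" using vy' xy' by auto
  then obtain u where xu: "E x u" and vu: "E v u" and x'u: "gdist E x' u + 1 = gdist E x' x"
    using quadrangle[of x' x v y] xx' vx' gdist_commute[of x x'] edge_sym[OF xy] yv by metis
  have ux': "gdist E u x' = n" using x'u xx' gdist_commute[of x' u] gdist_commute[of x x'] by simp
  have "gdist E x y' \<le> gdist E u y' + 1"
    using gdist_edge_le[OF edge_sym[OF xu]] by (simp add: gdist_commute[of _ y'])
  then have "u \<in> hs E x y" using hs_eq ux' xy' by (simp add: hs_def)
  moreover have "v \<notin> hs E x y"
    using hs_eq vy' vx' hs_compl[OF x'y'] by (auto simp: hs_def gdist_commute[of v x'])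
  ultimately have "hs E u v = hs E x y" using hs_eq_if_crossing xy edge_sym[OF vu] by blast
  then show ?thesis using xu vu edge_sym[OF vu] ux' by blast
qed

lemma boundary_invariant:
  assumes F: "F \<subseteq> HS E"
    and step: "\<And>x u y. E x u \<Longrightarrow> E x y \<Longrightarrow> x \<in> \<Inter>F \<Longrightarrow> u \<in> \<Inter>F \<Longrightarrow> y \<notin> \<Inter>F \<Longrightarrow>
                 wallE E x y = W \<Longrightarrow> f x = f u"
    and xy: "E x y" "x \<in> \<Inter>F" "y \<notin> \<Inter>F" "wallE E x y = W"
    and x'y': "E x' y'" "x' \<in> \<Inter>F" "y' \<notin> \<Inter>F" "wallE E x' y' = W"
  shows "f x = f x'"
proof -
  have "hs E x y = hs E x' y'"
    using hs_eq_if_wallE_eq[of x y x' y'] Inter_HS_subset_hs[OF F] xy x'y' by blast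
  with xy show ?thesis
  proof (induction "gdist E x x'" arbitrary: x y)
    case 0
    then show ?case using gdist_eq_0D by metis
  next
    case (Suc n)
    obtain u v where xu: "E x u" and uv: "E u v" and hs_uv: "hs E u v = hs E x y"
        and ux': "gdist E u x' = n"
      using parallel_edge_closer[of x y x' y'] Suc x'y' by metis
    have "u \<in> \<Inter>F"
      using Inter_HS_geodesic_step[OF F \<open>x \<in> \<Inter>F\<close> \<open>x' \<in> \<Inter>F\<close> xu] ux' Suc.hyps(2)
        gdist_commute[of u x'] gdist_commute[of x x'] by simp
    moreover have "v \<notin> \<Inter>F"
      using Inter_HS_subset_hs[OF F] Suc.prems hs_uv hs_self_iff[of v u] hs_compl[OF uv]
        edge_irrefl[of v] uv by blast
    moreover have "wallE E u v = W" using wallE_eq_if_hs_eq[OF uv \<open>E x y\<close>] hs_uv Suc.prems by simp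
    ultimately have "f u = f x'" using Suc.hyps(1)[of u v] ux' uv Suc.prems hs_uv by simp
    then show ?case using step[OF xu] Suc.prems \<open>u \<in> \<Inter>F\<close> by simp
  qed
qed

end

section \<open>Distances in the cube complex\<close>

lemma cdist_commute: "cdist E p q = cdist E q p"
  unfolding cdist_def by (simp add: eq_commute power2_commute)

lemma chain_len_nonneg: "0 \<le> chain_len E ps"
  unfolding chain_len_def cdist_def by (simp add: sum_nonneg)

lemma cdX_le_chain_len: "is_chain E p q ps \<Longrightarrow> cdX E p q \<le> chain_len E ps"
  unfolding cdX_def by (rule cInf_lower) (auto intro: bdd_belowI[of _ 0] chain_len_nonneg)

lemma cdX_self: "cdX E p p = 0"
proof -
  have "is_chain E p p [p]" "chain_len E [p] = 0" by (simp_all add: is_chain_def chain_len_def)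
  then show ?thesis unfolding cdX_def by (intro cInf_eq_minimum) (auto intro: chain_len_nonneg)
qed

text \<open>\<open>Inf {}\<close> is an unspecified real, so an infimum of reals bounded below by \<open>b\<close> is only
  known to be at least \<open>min b (Inf {})\<close>.\<close>
lemma Inf_real_ge_min: "(\<And>x. x \<in> X \<Longrightarrow> b \<le> x) \<Longrightarrow> min b (Inf {}) \<le> Inf (X :: real set)"
  by (cases "X = {}") (auto intro: cInf_greatest min.coboundedI1)

lemma cdX_ge: "min 0 (Inf {}) \<le> cdX E p q"
  unfolding cdX_def by (rule Inf_real_ge_min) (auto intro: chain_len_nonneg)

lemma wdist_ge: "min 0 (Inf {}) \<le> wdist E V W"
proof -
  have "min (min 0 (Inf {})) (Inf {}) \<le> wdist E V W"
    unfolding wdist_def by (rule Inf_real_ge_min) (auto intro: cdX_ge)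
  then show ?thesis by (simp add: min.assoc)
qed

lemma wdist_le_cdX: "p \<in> hyp E V \<Longrightarrow> q \<in> hyp E W \<Longrightarrow> wdist E V W \<le> cdX E p q"
  unfolding wdist_def by (rule cInf_lower) (auto intro: bdd_belowI[of _ "min 0 (Inf {})"] cdX_ge)

lemma qdist_le_wdist: "V \<in> O1 \<Longrightarrow> W \<in> O2 \<Longrightarrow> qdist E O1 O2 \<le> wdist E V W"
  unfolding qdist_def by (rule cInf_lower) (auto intro: bdd_belowI[of _ "min 0 (Inf {})"] wdist_ge)

lemma vpt_Pts: "vpt E v \<in> Pts E"
proof -
  have "cube E v {}" "in_cube E v {} (vpt E v)" by (auto simp: cube_def in_cube_def vpt_def)
  then show ?thesis unfolding Pts_def by blast
qed

text \<open>A constant path at a vertex is a degenerate geodesic triangle.\<close>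
lemma hyperbolic_nonneg:
  assumes "hyperbolic E \<delta>"
  shows "0 \<le> \<delta>"
proof -
  fix v
  define p where "p = vpt E v"
  have "p \<in> Pts E" "geodesic E p p (\<lambda>_. p)" by (simp_all add: p_def geodesic_def vpt_Pts cdX_self)
  then have "\<forall>x\<in>(\<lambda>_. p) ` {0..cdX E p p}.
      \<exists>y\<in>(\<lambda>_. p) ` {0..cdX E p p} \<union> (\<lambda>_. p) ` {0..cdX E p p}. cdX E x y \<le> \<delta>"
    using assms unfolding hyperbolic_def by blast
  then show ?thesis by (simp add: cdX_self)
qed

lemma vpt_mem_Inter_ghalf_iff:
  "F \<subseteq> HS E \<Longrightarrow> vpt E v \<in> Pts E \<inter> \<Inter> (ghalf E ` F) \<longleftrightarrow> v \<in> \<Inter>F"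
  using vpt_Pts[of E v] by (auto simp: ghalf_def vpt_def)

context median
begin

lemma wall_of_eq_wallE_iff: "E a b \<Longrightarrow> wall_of h = wallE E a b \<longleftrightarrow> h \<in> wallE E a b"
  using hs_compl[of a b] by (auto simp: wall_of_def wallE_def)

lemma wallE_subset_HS: "E a b \<Longrightarrow> wallE E a b \<subseteq> HS E"
  using edge_sym[of a b] by (auto simp: wallE_def HS_def)

lemma mem_HS_edge_iff:
  assumes ab: "E a b" and h: "h \<in> HS E"
  shows "b \<in> h \<longleftrightarrow> (a \<in> h \<longleftrightarrow> h \<notin> wallE E a b)"
proof (cases "h \<in> wallE E a b")
  case True
  then show ?thesis
    using hs_self_iff[of a b] hs_self_iff[of b a] hs_compl[OF ab] edge_irrefl ab
    by (auto simp: wallE_def)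
next
  case False
  obtain c d where "E c d" "h = hs E c d" using h HSE by blast
  then have "hs E a b \<noteq> h" "hs E b a \<noteq> h" using False by (auto simp: wallE_def)
  then show ?thesis
    using False hs_eq_if_crossing[OF \<open>E c d\<close>] ab edge_sym[OF ab] \<open>h = hs E c d\<close> by blast
qed

lemma cube_edge: "E a b \<Longrightarrow> cube E a {wallE E a b}"
  unfolding cube_def
proof (intro conjI allI impI)
  assume ab: "E a b"
  then show "{wallE E a b} \<subseteq> walls E" by (auto simp: walls_def)
  fix T assume "T \<subseteq> {wallE E a b}"
  then consider "T = {}" | "T = {wallE E a b}" by blast
  then show "\<exists>u. \<forall>h\<in>HS E. (u \<in> h) = ((a \<in> h) \<noteq> (wall_of h \<in> T))"
  proof cases
    case 2
    then show ?thesis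
      using mem_HS_edge_iff[OF ab] wall_of_eq_wallE_iff[OF ab] by (intro exI[of _ b]) auto
  qed auto
qed simp

lemma dimX_ge_1:
  assumes "finite_dim E" "E a b"
  shows "1 \<le> dimX E"
proof -
  have "card {wallE E a b} \<in> {card S | S. \<exists>v. cube E v S}" using cube_edge[OF assms(2)] by blast
  then show ?thesis using assms(1) unfolding dimX_def finite_dim_def by (simp add: cSup_upper)
qed

definition edge_midpoint :: "'v \<Rightarrow> 'v \<Rightarrow> 'v set \<Rightarrow> real" where
  "edge_midpoint a b h = (if h \<in> wallE E a b then 1/2 else vpt E a h)"

lemma uminus_mem_wallE: "E a b \<Longrightarrow> h \<in> wallE E a b \<Longrightarrow> - h \<in> wallE E a b"
  using hs_compl[of a b] by (auto simp: wallE_def)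

lemma in_cube_edge:
  assumes ab: "E a b" and p: "p = vpt E a \<or> p = edge_midpoint a b"
  shows "in_cube E a {wallE E a b} p"
  unfolding in_cube_def
proof (intro conjI allI impI ballI)
  fix h
  show "h \<notin> HS E \<Longrightarrow> p h = 0"
    using p wallE_subset_HS[OF ab] by (auto simp: edge_midpoint_def vpt_def)
  assume h: "h \<in> HS E"
  show "if wall_of h \<in> {wallE E a b} then 0 \<le> p h \<and> p h \<le> 1 \<and> p (- h) = 1 - p h
        else p h = vpt E a h"
  proof (cases "h \<in> wallE E a b")
    case True
    then have "- h \<in> HS E" "- h \<in> wallE E a b"
      using uminus_mem_wallE[OF ab] wallE_subset_HS[OF ab] by blast+
    then show ?thesis
      using True p h wall_of_eq_wallE_iff[OF ab] by (auto simp: edge_midpoint_def vpt_def)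
  next
    case False
    then show ?thesis using p wall_of_eq_wallE_iff[OF ab] by (auto simp: edge_midpoint_def)
  qed
qed

lemma edge_midpoint_hyp: "E a b \<Longrightarrow> edge_midpoint a b \<in> hyp E (wallE E a b)"
proof -
  assume ab: "E a b"
  then have "edge_midpoint a b \<in> Pts E" using cube_edge in_cube_edge unfolding Pts_def by blast
  then show ?thesis by (simp add: hyp_def edge_midpoint_def)
qed

lemma cdist_edge_midpoint:
  assumes ab: "E a b"
  shows "cdist E (vpt E a) (edge_midpoint a b) = 1/2"
proof -
  have diff: "{h \<in> HS E. vpt E a h \<noteq> edge_midpoint a b h} = {hs E a b, hs E b a}"
    using wallE_subset_HS[OF ab] by (auto simp: edge_midpoint_def vpt_def wallE_def)
  have "hs E a b \<noteq> hs E b a" using hs_self_iff[of a b] hs_compl[OF ab] edge_irrefl ab by auto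
  then have sum: "(\<Sum>h\<in>{hs E a b, hs E b a}. (vpt E a h - edge_midpoint a b h)\<^sup>2) = 1/2"
    using wallE_subset_HS[OF ab] by (simp add: edge_midpoint_def vpt_def wallE_def power2_eq_square)
  have "cdist E (vpt E a) (edge_midpoint a b) = sqrt (1/4)"
    unfolding cdist_def diff sum by simp
  also have "\<dots> = 1/2" by (rule real_sqrt_unique) (auto simp: power2_eq_square)
  finally show ?thesis .
qed

text \<open>The midpoints of two edges at a common vertex are joined through that vertex by a chain
  of two segments of length \<open>1/2\<close>.\<close>
lemma cdX_edge_midpoints_le_1:
  assumes ab: "E a b" and ac: "E a c"
  shows "cdX E (edge_midpoint a b) (edge_midpoint a c) \<le> 1"
proof -
  let ?ps = "[edge_midpoint a b, vpt E a, edge_midpoint a c]"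
  have "same_cube E (edge_midpoint a b) (vpt E a)" "same_cube E (vpt E a) (edge_midpoint a c)"
    using cube_edge[OF ab] cube_edge[OF ac] in_cube_edge[OF ab] in_cube_edge[OF ac]
    unfolding same_cube_def by blast+
  then have "is_chain E (edge_midpoint a b) (edge_midpoint a c) ?ps"
    by (auto simp: is_chain_def less_Suc_eq)
  then have "cdX E (edge_midpoint a b) (edge_midpoint a c) \<le> chain_len E ?ps"
    by (rule cdX_le_chain_len)
  also have "chain_len E ?ps =
      cdist E (edge_midpoint a b) (vpt E a) + cdist E (vpt E a) (edge_midpoint a c)"
    by (simp add: chain_len_def numeral_2_eq_2)
  also have "\<dots> = 1"
    using cdist_edge_midpoint[OF ab] cdist_edge_midpoint[OF ac]
      cdist_commute[of E "edge_midpoint a b"] by simp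
  finally show ?thesis .
qed

end

section \<open>Colour classes\<close>

lemma Wbar_self: "id \<in> \<phi> ` K \<Longrightarrow> W \<in> Wbar \<phi> K W"
  unfolding Wbar_def wimg_def by force

lemma gball_center: "U \<in> gball E \<phi> K R r U"
  unfolding gball_def by force

lemma gball_subset_adjacent:
  assumes "(U, U') \<in> GammaRel E \<phi> K R" "r' < r"
  shows "gball E \<phi> K R r' U' \<subseteq> gball E \<phi> K R r U"
proof
  fix U'' assume "U'' \<in> gball E \<phi> K R r' U'"
  then obtain n where "n \<le> r'" and path: "(U', U'') \<in> GammaRel E \<phi> K R ^^ n"
    unfolding gball_def by blast
  then have "Suc n \<le> r" "(U, U'') \<in> GammaRel E \<phi> K R ^^ Suc n"
    using assms relpow_Suc_I2[OF assms(1) path] by simp_all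
  then show "U'' \<in> gball E \<phi> K R r U" unfolding gball_def by blast
qed

text \<open>The ball defining \<open>[c]\<^sub>V\<close>, on which \<open>c'\<close> agrees with \<open>c\<close>, contains the one defining \<open>[c]\<^sub>W\<close>.\<close>
lemma cls_eq_if_mem_cls_adjacent:
  assumes adj: "(Wbar \<phi> K V, Wbar \<phi> K W) \<in> GammaRel E \<phi> K R"
    and less: "c (Wbar \<phi> K W) < c (Wbar \<phi> K V)"
    and c': "c' \<in> cls E \<phi> K R k c V"
  shows "c' (Wbar \<phi> K W) = c (Wbar \<phi> K W) \<and> cls E \<phi> K R k c' W = cls E \<phi> K R k c W"
proof -
  have agree: "c' U = c U" if "U \<in> gball E \<phi> K R (c (Wbar \<phi> K W)) (Wbar \<phi> K W)" for U
    using c' gball_subset_adjacent[OF adj less] that by (auto simp: cls_def)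
  then have same: "c' (Wbar \<phi> K W) = c (Wbar \<phi> K W)" using gball_center by blast
  then show ?thesis using agree by (auto simp: cls_def)
qed

context median
begin

lemma GammaRel_adjacent_edges:
  assumes "id \<in> \<phi> ` K" "1 \<le> R" and xu: "E x u" and xy: "E x y"
    and "Wbar \<phi> K (wallE E x u) \<noteq> Wbar \<phi> K (wallE E x y)"
  shows "(Wbar \<phi> K (wallE E x u), Wbar \<phi> K (wallE E x y)) \<in> GammaRel E \<phi> K R"
proof -
  have "\<And>V. V \<in> Wbar \<phi> K V" using Wbar_self assms(1) .
  then have "qdist E (Wbar \<phi> K (wallE E x u)) (Wbar \<phi> K (wallE E x y))
      \<le> wdist E (wallE E x u) (wallE E x y)"
    by (intro qdist_le_wdist)
  also have "\<dots> \<le> cdX E (edge_midpoint x u) (edge_midpoint x y)"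
    using edge_midpoint_hyp[OF xu] edge_midpoint_hyp[OF xy] by (rule wdist_le_cdX)
  also have "\<dots> \<le> R" using cdX_edge_midpoints_le_1[OF xu xy] assms(2) by linarith
  finally have "qdist E (Wbar \<phi> K (wallE E x u)) (Wbar \<phi> K (wallE E x y)) \<le> R" .
  moreover have "Wbar \<phi> K (wallE E x u) \<in> VGamma E \<phi> K" "Wbar \<phi> K (wallE E x y) \<in> VGamma E \<phi> K"
    unfolding VGamma_def walls_def using xu xy by blast+
  ultimately show ?thesis using assms(5) unfolding GammaRel_def by simp
qed


lemma cls_eq_across_adjacent_edges:
  assumes "id \<in> \<phi> ` K" "1 \<le> R" and vu: "E v u" and vw: "E v w"
    and less: "c v (Wbar \<phi> K (wallE E v w)) < c v (Wbar \<phi> K (wallE E v u))"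
    and "c u \<in> cls E \<phi> K R k (c v) (wallE E v u)"
  shows "c u (Wbar \<phi> K (wallE E v w)) = c v (Wbar \<phi> K (wallE E v w)) \<and>
    cls E \<phi> K R k (c u) (wallE E v w) = cls E \<phi> K R k (c v) (wallE E v w)"
proof -
  have "(Wbar \<phi> K (wallE E v u), Wbar \<phi> K (wallE E v w)) \<in> GammaRel E \<phi> K R"
    using GammaRel_adjacent_edges[OF assms(1,2) vu vw] less by force
  then show ?thesis using cls_eq_if_mem_cls_adjacent[OF _ less assms(6)] by blast
qed

end

theorem lemma8p4:
  fixes G :: "'g monoid" and E :: "'v \<Rightarrow> 'v \<Rightarrow> bool" and \<phi> :: "'g \<Rightarrow> 'v \<Rightarrow> 'v"
    and K H :: "'g set" and \<delta> R :: real and k j :: nat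
    and Z :: "('v set \<Rightarrow> real) set" and c :: "'v \<Rightarrow> ('v set set set \<Rightarrow> nat)"
    and W :: "'v set set"
  assumes X_cat0: "median_graph E"
    and X_findim: "finite_dim E"
    and X_hyp: "hyperbolic E \<delta>"
    and G_grp: "group G"
    and G_act: "auto_action G E \<phi>"
    and G_proper: "proper_action G E \<phi>"
    and G_cocpt: "cocompact_on E \<phi> (carrier G) (Pts E)"
    and K_normal: "K \<lhd> G"
    and K_tf: "\<forall>g\<in>K. \<forall>n::nat. n > 0 \<and> g [^]\<^bsub>G\<^esub> n = \<one>\<^bsub>G\<^esub> \<longrightarrow> g = \<one>\<^bsub>G\<^esub>"
    and walls_compact: "\<forall>V\<in>walls E. \<exists>C. compactin (mtop E) C \<and> hyp E V \<subseteq> (\<Union>g\<in>K. pact \<phi> g ` C)"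
    and walls_embedded: "\<forall>V\<in>walls E. \<forall>g\<in>K. wimg \<phi> g V = V \<or> hyp E (wimg \<phi> g V) \<inter> hyp E V = {}"
    and R_bound: "R \<ge> \<delta> + 2 * sqrt (real (dimX E))"
    and R_sep: "\<forall>W1\<in>walls E. \<forall>W2\<in>walls E. W1 \<noteq> W2 \<and> wdist E W1 W2 < R \<longrightarrow> Wbar \<phi> K W1 \<noteq> Wbar \<phi> K W2"
    and k_deg: "\<forall>U\<in>VGamma E \<phi> K. finite {U'. (U, U') \<in> GammaRel E \<phi> K R} \<and>
                   card {U'. (U, U') \<in> GammaRel E \<phi> K R} \<le> k"
    and j_range: "j \<le> k + 1"
    and Z_half: "\<exists>F\<subseteq>HS E. Z = Pts E \<inter> \<Inter> (ghalf E ` F)"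
    and Z_vertex: "\<exists>v. vpt E v \<in> Z"
    and H_sub: "subgroup H G"
    and H_pres: "\<forall>g\<in>H. pact \<phi> g ` Z = Z"
    and H_free: "\<forall>g\<in>H. \<forall>p\<in>Z. pact \<phi> g p = p \<longrightarrow> g = \<one>\<^bsub>G\<^esub>"
    and H_cocpt: "cocompact_on E \<phi> H Z"
    and c_col: "\<forall>x. vpt E x \<in> Z \<longrightarrow> c x \<in> Col E \<phi> K R (k + 1)"
    and c_equiv: "\<forall>g\<in>H. \<forall>x. vpt E x \<in> Z \<longrightarrow> c (\<phi> g x) = cact G \<phi> g (c x)"
    and P1: "\<forall>x y. E x y \<and> vpt E x \<in> Z \<and> vpt E y \<in> Z \<longrightarrow>
               cls E \<phi> K R k (c x) (wallE E x y) = cls E \<phi> K R k (c y) (wallE E x y)"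
    and P2: "\<forall>x y. E x y \<and> vpt E x \<in> Z \<longrightarrow>
               (vpt E y \<in> Z \<longleftrightarrow> c x (Wbar \<phi> K (wallE E x y)) > j)"
    and W_bdry: "\<exists>x y. E x y \<and> vpt E x \<in> Z \<and> vpt E y \<notin> Z \<and> W = wallE E x y"
  shows "\<forall>x y x' y'. E x y \<and> vpt E x \<in> Z \<and> vpt E y \<notin> Z \<and> wallE E x y = W \<and>
           E x' y' \<and> vpt E x' \<in> Z \<and> vpt E y' \<notin> Z \<and> wallE E x' y' = W \<longrightarrow>
           cls E \<phi> K R k (c x) W = cls E \<phi> K R k (c x') W \<and>
           c x (Wbar \<phi> K W) = c x' (Wbar \<phi> K W)"
proof (intro allI impI)
  fix x y x' y'
  assume edges: "E x y \<and> vpt E x \<in> Z \<and> vpt E y \<notin> Z \<and> wallE E x y = W \<and>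
    E x' y' \<and> vpt E x' \<in> Z \<and> vpt E y' \<notin> Z \<and> wallE E x' y' = W"
  interpret median E using X_cat0 by (rule median.intro)
  obtain F where F: "F \<subseteq> HS E" and Z_eq: "Z = Pts E \<inter> \<Inter> (ghalf E ` F)" using Z_half by blast
  have Z: "vpt E v \<in> Z \<longleftrightarrow> v \<in> \<Inter>F" for v using vpt_mem_Inter_ghalf_iff[OF F] Z_eq by simp
  have "1 \<le> dimX E" using dimX_ge_1[OF X_findim] edges by blast
  then have "1 \<le> sqrt (real (dimX E))" by simp
  then have "1 \<le> R" using R_bound hyperbolic_nonneg[OF X_hyp] by linarith
  have "\<one>\<^bsub>G\<^esub> \<in> K" "\<phi> \<one>\<^bsub>G\<^esub> = id"
    using subgroup.one_closed[OF normal_imp_subgroup[OF K_normal]] G_act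
    unfolding auto_action_def by blast+
  then have one: "id \<in> \<phi> ` K" by (metis image_eqI)
  define f where "f v = (c v (Wbar \<phi> K W), cls E \<phi> K R k (c v) W)" for v
  have "f x = f x'"
  proof (rule boundary_invariant[OF F])
    fix v u w
    assume vu: "E v u" and vw: "E v w" and "v \<in> \<Inter>F" "u \<in> \<Inter>F" "w \<notin> \<Inter>F"
      and W: "wallE E v w = W"
    then have "vpt E v \<in> Z" "vpt E u \<in> Z" "vpt E w \<notin> Z" using Z by simp_all
    then have "c v (Wbar \<phi> K W) < c v (Wbar \<phi> K (wallE E v u))"
      using P2[rule_format, of v u] P2[rule_format, of v w] vu vw W by auto
    moreover have "c u \<in> cls E \<phi> K R k (c v) (wallE E v u)"
      using P1[rule_format, of v u] c_col vu \<open>vpt E v \<in> Z\<close> \<open>vpt E u \<in> Z\<close> by (simp add: cls_def)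
    ultimately have "c u (Wbar \<phi> K W) = c v (Wbar \<phi> K W) \<and>
        cls E \<phi> K R k (c u) W = cls E \<phi> K R k (c v) W"
      using cls_eq_across_adjacent_edges[OF one \<open>1 \<le> R\<close> vu vw] W by simp
    then show "f v = f u" by (simp add: f_def)
  qed (use edges Z in blast)+
  then show "cls E \<phi> K R k (c x) W = cls E \<phi> K R k (c x') W \<and> c x (Wbar \<phi> K W) = c x' (Wbar \<phi> K W)"
    by (simp add: f_def)
qed

end
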